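(* Let $\sigma>0$ and let $\vec\alpha,\vec\beta$ be non-negative sequences, neither identically zero, with $\sum_n n\alpha_n<\infty$ and $\sum_n n\beta_n<\infty$. Then for all integers $m,n\ge0$ and $L\ge1$, $$\frac{1}{2\pi}\int_{-2}^2 u_m(x)u_n(x)(x+\sigma)^L\sqrt{4-x^2}\,dx=\sum_{\vec\gamma\in\mathcal M^{(L)}_{m,n}}w(\vec\gamma),$$ and for real $z_0,z_1$ with $|z_0|,|z_1|\le1$, $$\mathbb E\big[z_0^{\gamma^{(L)}_0}z_1^{\gamma^{(L)}_L}\big]=\frac{\mathsf M_{\vec\alpha,\vec\beta,L}(z_0,z_1)}{\mathsf M_{\vec\alpha,\vec\beta,L}(1,1)},\qquad \mathsf M_{\vec\alpha,\vec\beta,L}(z_0,z_1):=\frac{1}{2\pi}\int_{-2}^2\Phi_{\vec\alpha}(z_0,x)\Phi_{\vec\beta}(z_1,x)(x+\sigma)^L\sqrt{4-x^2}\,dx,$$ where $\Phi_{\vec\alpha}(z,x)=\sum_{n\ge0}\alpha_nz^nu_n(x)$ and $\Phi_{\vec\beta}(z,x)=\sum_{n\ge0}\beta_nz^nu_n(x)$.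
   Context: $u_n$ are the monic Chebyshev polynomials of the second kind: $u_{-1}=0$, $u_0=1$, $xu_n(x)=u_{n+1}(x)+u_{n-1}(x)$ for $n\ge0$ (so $u_n(2\cos\theta)=\sin((n+1)\theta)/\sin\theta$). A Motzkin path of length $L$ is a sequence $(\gamma_0,\dots,\gamma_L)$ of non-negative integers with $|\gamma_k-\gamma_{k-1}|\le1$; $\mathcal M^{(L)}_{m,n}$ is the set of those with $\gamma_0=m$, $\gamma_L=n$, and $\mathcal M^{(L)}=\bigcup_{m,n}\mathcal M^{(L)}_{m,n}$. Weight: $w(\vec\gamma)=\sigma^{\#\{k:\gamma_k=\gamma_{k-1}\}}$. $(\gamma^{(L)}_0,\dots,\gamma^{(L)}_L)$ is a random path with law $\Pr_L(\vec\gamma)=\alpha_{\gamma_0}\beta_{\gamma_L}w(\vec\gamma)/\sum_{\vec\eta\in\mathcal M^{(L)}}\alpha_{\eta_0}\beta_{\eta_L}w(\vec\eta)$. *)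

theory Defs
  imports "HOL-Analysis.Analysis"
begin

fun cheb_u :: "nat \<Rightarrow> real \<Rightarrow> real" where
  "cheb_u 0 x = 1"
| "cheb_u (Suc 0) x = x"
| "cheb_u (Suc (Suc n)) x = x * cheb_u (Suc n) x - cheb_u n x"

definition motzkin_paths :: "nat \<Rightarrow> nat list set" where
  "motzkin_paths L = {\<gamma>. length \<gamma> = L + 1 \<and>
      (\<forall>k\<in>{1..L}. \<bar>int (\<gamma> ! k) - int (\<gamma> ! (k - 1))\<bar> \<le> 1)}"

definition motzkin_paths_between :: "nat \<Rightarrow> nat \<Rightarrow> nat \<Rightarrow> nat list set" where
  "motzkin_paths_between L m n = {\<gamma> \<in> motzkin_paths L. \<gamma> ! 0 = m \<and> \<gamma> ! L = n}"

definition motzkin_weight :: "real \<Rightarrow> nat \<Rightarrow> nat list \<Rightarrow> real" where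
  "motzkin_weight \<sigma> L \<gamma> = \<sigma> ^ card {k \<in> {1..L}. \<gamma> ! k = \<gamma> ! (k - 1)}"

definition motzkin_prob ::
  "(nat \<Rightarrow> real) \<Rightarrow> (nat \<Rightarrow> real) \<Rightarrow> real \<Rightarrow> nat \<Rightarrow> nat list \<Rightarrow> real" where
  "motzkin_prob \<alpha> \<beta> \<sigma> L \<gamma> =
     \<alpha> (\<gamma> ! 0) * \<beta> (\<gamma> ! L) * motzkin_weight \<sigma> L \<gamma> /
     infsum (\<lambda>\<eta>. \<alpha> (\<eta> ! 0) * \<beta> (\<eta> ! L) * motzkin_weight \<sigma> L \<eta>) (motzkin_paths L)"

definition Phi :: "(nat \<Rightarrow> real) \<Rightarrow> real \<Rightarrow> real \<Rightarrow> real" where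
  "Phi \<alpha> z x = (\<Sum>n. \<alpha> n * z ^ n * cheb_u n x)"

definition M_int ::
  "(nat \<Rightarrow> real) \<Rightarrow> (nat \<Rightarrow> real) \<Rightarrow> real \<Rightarrow> nat \<Rightarrow> real \<Rightarrow> real \<Rightarrow> real" where
  "M_int \<alpha> \<beta> \<sigma> L z0 z1 = 1 / (2 * pi) *
     integral {-2..2} (\<lambda>x. Phi \<alpha> z0 x * Phi \<beta> z1 x * (x + \<sigma>) ^ L * sqrt (4 - x\<^sup>2))"

end

theory Submission
  imports Defs
begin

text \<open>Under \<open>x = 2 cos \<theta>\<close> one has \<open>u\<^sub>n(x) sqrt (4 - x\<^sup>2) = 2 sin ((n + 1) \<theta>)\<close>, so the \<open>u\<^sub>n\<close>
  are orthogonal for the semicircle weight, each with squared norm \<open>2\<pi>\<close>. The three-term recurrence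
  \<open>x u\<^sub>m = u\<^sub>m\<^sub>+\<^sub>1 + u\<^sub>m\<^sub>-\<^sub>1\<close> expands \<open>(x + \<sigma>)\<^sup>L u\<^sub>m\<close> as \<open>\<Sum>\<^sub>k W\<^sub>L(m, k) u\<^sub>k\<close>, where, by the
  same first-step decomposition, \<open>W\<^sub>L(m, k)\<close> is the total weight of the Motzkin paths of length
  \<open>L\<close> from \<open>m\<close> to \<open>k\<close>; orthogonality then gives the first identity.

  For the generating function, \<open>|u\<^sub>n| \<le> n + 1\<close> on \<open>[-2, 2]\<close> and \<open>\<Sum> n \<alpha>\<^sub>n < \<infinity>\<close> make the
  series \<open>\<Phi>\<close> converge uniformly, so \<open>M(z\<^sub>0, z\<^sub>1)\<close> integrates termwise to
  \<open>\<Sum>\<^sub>m\<^sub>,\<^sub>n \<alpha>\<^sub>m z\<^sub>0\<^sup>m \<beta>\<^sub>n z\<^sub>1\<^sup>n W\<^sub>L(m, n)\<close>. Grouping paths by their starting height leaves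
  finitely many paths per group, and the case \<open>z\<^sub>0 = z\<^sub>1 = 1\<close> dominates the path sum, so it
  converges absolutely to the same value.\<close>

lemma cheb_u_three_term:
  "x * cheb_u m x = cheb_u (Suc m) x + (if m > 0 then cheb_u (m - 1) x else 0)"
  by (cases m) auto

lemma continuous_on_cheb_u: "continuous_on S (cheb_u k)"
proof -
  have "continuous_on S (cheb_u k) \<and> continuous_on S (cheb_u (Suc k))"
    by (induction k) (auto intro!: continuous_intros)
  then show ?thesis by blast
qed

lemma cheb_u_cos: "cheb_u k (2 * cos t) * sin t = sin ((real k + 1) * t)"
proof (induction k "2 * cos t" rule: cheb_u.induct)
  case 2
  show ?case by (simp add: sin_double)
next
  case (3 n)
  have "cheb_u (Suc (Suc n)) (2 * cos t) * sin t
      = 2 * cos t * sin ((real n + 2) * t) - sin ((real n + 1) * t)"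
    using 3 by (simp add: algebra_simps)
  also have "\<dots> = sin ((real n + 3) * t)"
    using sin_add[of "(real n + 2) * t" t] sin_diff[of "(real n + 2) * t" t]
    by (simp add: algebra_simps)
  finally show ?case by (simp add: add.commute)
qed simp

lemma cheb_u_endpoints: "cheb_u k 2 = real k + 1 \<and> cheb_u k (-2) = (-1) ^ k * (real k + 1)"
proof -
  have "(cheb_u k 2 = real k + 1 \<and> cheb_u k (-2) = (-1) ^ k * (real k + 1)) \<and>
        (cheb_u (Suc k) 2 = real (Suc k) + 1 \<and>
         cheb_u (Suc k) (-2) = (-1) ^ Suc k * (real (Suc k) + 1))"
    by (induction k) (auto simp: algebra_simps)
  then show ?thesis by blast
qed

lemma abs_sin_nat_mult_le: "\<bar>sin (real n * t)\<bar> \<le> real n * \<bar>sin t\<bar>"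
proof (induction n)
  case (Suc n)
  have "\<bar>sin (real (Suc n) * t)\<bar> = \<bar>sin (real n * t + t)\<bar>"
    by (simp add: distrib_right add.commute)
  also have "\<dots> \<le> \<bar>sin (real n * t)\<bar> * \<bar>cos t\<bar> + \<bar>cos (real n * t)\<bar> * \<bar>sin t\<bar>"
    unfolding sin_add by (metis abs_mult abs_triangle_ineq)
  also have "\<dots> \<le> \<bar>sin (real n * t)\<bar> + \<bar>sin t\<bar>"
    by (intro add_mono) (auto intro: mult_left_le mult_left_le_one_le simp: abs_cos_le_one)
  finally show ?case using Suc by (simp add: algebra_simps)
qed simp

lemma abs_cheb_u_le:
  assumes "x \<in> {-2..2}"
  shows "\<bar>cheb_u k x\<bar> \<le> real k + 1"
proof (cases "x = 2 \<or> x = -2")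
  case True
  then show ?thesis using cheb_u_endpoints[of k] by (auto simp: abs_mult)
next
  case False
  define t where "t = arccos (x / 2)"
  have x: "x = 2 * cos t" using assms by (simp add: t_def cos_arccos)
  have "0 < t" "t < pi" using assms False by (auto simp: t_def arccos_lt_bounded)
  then have s: "sin t > 0" by (simp add: sin_gt_zero)
  have "\<bar>cheb_u k x\<bar> * sin t = \<bar>cheb_u k x * sin t\<bar>"
    using s by (simp add: abs_mult)
  also have "\<dots> = \<bar>sin ((real k + 1) * t)\<bar>"
    by (simp add: x cheb_u_cos)
  also have "\<dots> \<le> (real k + 1) * sin t"
    using abs_sin_nat_mult_le[of "Suc k" t] s by (simp add: ac_simps)
  finally show ?thesis using s by simp
qed

lemma has_integral_cos_mult_reflected:
  assumes "sin (c * pi) = 0"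
  shows "((\<lambda>t. cos (c * (pi - t))) has_integral (if c = 0 then pi else 0)) {0..pi}"
proof (cases "c = 0")
  case True
  then show ?thesis using has_integral_const_real[of "1::real" 0 pi] by simp
next
  case False
  have "((\<lambda>t. - sin (c * (pi - t)) / c) has_vector_derivative cos (c * (pi - t)))
          (at t within {0..pi})" for t
    unfolding has_real_derivative_iff_has_vector_derivative[symmetric]
    using False by (auto intro!: derivative_eq_intros)
  then have "((\<lambda>t. cos (c * (pi - t))) has_integral
      (- sin (c * (pi - pi)) / c - - sin (c * (pi - 0)) / c)) {0..pi}"
    by (intro fundamental_theorem_of_calculus) auto
  then show ?thesis using False assms by simp
qed

lemma sqrt_four_minus_cos_sq: "0 \<le> sin t \<Longrightarrow> sqrt (4 - (2 * cos t)\<^sup>2) = 2 * sin t"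
  by (simp add: power_mult_distrib cos_squared_eq real_sqrt_mult)

lemma cheb_u_product_cos:
  assumes "0 \<le> sin t"
  shows "2 * sin t * (cheb_u m (2 * cos t) * cheb_u n (2 * cos t) * sqrt (4 - (2 * cos t)\<^sup>2))
       = 2 * cos ((real m - real n) * t) - 2 * cos (real (m + n + 2) * t)"
proof -
  have "2 * sin t * (cheb_u m (2 * cos t) * cheb_u n (2 * cos t) * sqrt (4 - (2 * cos t)\<^sup>2))
      = 4 * (cheb_u m (2 * cos t) * sin t) * (cheb_u n (2 * cos t) * sin t)"
    unfolding sqrt_four_minus_cos_sq[OF assms] by (simp add: algebra_simps)
  also have "\<dots> = 4 * sin ((real m + 1) * t) * sin ((real n + 1) * t)"
    by (simp only: cheb_u_cos)
  also have "\<dots> = 2 * cos ((real m + 1) * t - (real n + 1) * t)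
                   - 2 * cos ((real m + 1) * t + (real n + 1) * t)"
    by (simp add: cos_diff cos_add)
  finally show ?thesis by (simp add: algebra_simps)
qed

lemma cheb_u_orthogonal:
  "((\<lambda>x. cheb_u m x * cheb_u n x * sqrt (4 - x\<^sup>2)) has_integral (if m = n then 2 * pi else 0))
     {-2..2}"
proof -
  define f where "f = (\<lambda>x. cheb_u m x * cheb_u n x * sqrt (4 - x\<^sup>2))"
  have f_cont: "continuous_on {-2..2} f"
    unfolding f_def by (intro continuous_intros continuous_on_cheb_u)
  have "((\<lambda>t. (2 * sin (pi - t)) *\<^sub>R f (2 * cos (pi - t)))
      has_integral integral {2 * cos (pi - 0)..2 * cos (pi - pi)} f) {0..pi}"
  proof (rule has_integral_substitution[of 0 pi "\<lambda>t. 2 * cos (pi - t)" "-2" 2 f])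
    show "(\<lambda>t. 2 * cos (pi - t)) ` {0..pi} \<subseteq> {-2..2}"
      using cos_le_one cos_ge_minus_one by (force simp: minus_le_iff)
    show "((\<lambda>t. 2 * cos (pi - t)) has_real_derivative 2 * sin (pi - t)) (at t within {0..pi})" for t
      by (auto intro!: derivative_eq_intros)
  qed (use f_cont in auto)
  then have substitution: "((\<lambda>t. (2 * sin (pi - t)) *\<^sub>R f (2 * cos (pi - t)))
      has_integral integral {-2..2} f) {0..pi}"
    by simp
  have diff_term: "((\<lambda>t. cos ((real m - real n) * (pi - t))) has_integral (if m = n then pi else 0))
      {0..pi}"
    using has_integral_cos_mult_reflected[of "real m - real n"] by (simp add: left_diff_distrib sin_diff)
  have sum_term: "((\<lambda>t. cos (real (m + n + 2) * (pi - t))) has_integral 0) {0..pi}"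
    using has_integral_cos_mult_reflected[of "real (m + n + 2)", OF sin_npi] by simp
  have "((\<lambda>t. 2 * cos ((real m - real n) * (pi - t)) - 2 * cos (real (m + n + 2) * (pi - t)))
      has_integral (if m = n then 2 * pi else 0)) {0..pi}"
    using has_integral_diff[OF has_integral_mult_right[OF diff_term, of 2]
        has_integral_mult_right[OF sum_term, of 2]]
    by (simp only: if_distrib[of "(*) 2"] mult_zero_right diff_zero)
  then have "((\<lambda>t. (2 * sin (pi - t)) *\<^sub>R f (2 * cos (pi - t)))
      has_integral (if m = n then 2 * pi else 0)) {0..pi}"
  proof (rule has_integral_eq[rotated])
    fix t :: real assume "t \<in> {0..pi}"
    then have "0 \<le> sin (pi - t)"
      by (intro sin_ge_zero) auto
    then show "2 * cos ((real m - real n) * (pi - t)) - 2 * cos (real (m + n + 2) * (pi - t))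
        = (2 * sin (pi - t)) *\<^sub>R f (2 * cos (pi - t))"
      unfolding f_def real_scaleR_def by (rule cheb_u_product_cos[symmetric])
  qed
  then have "integral {-2..2} f = (if m = n then 2 * pi else 0)"
    by (rule has_integral_unique[OF substitution])
  moreover have "(f has_integral integral {-2..2} f) {-2..2}"
    using f_cont by (intro integrable_integral integrable_continuous_real)
  ultimately show ?thesis
    unfolding f_def by (simp only:)
qed

text \<open>The entry \<open>(m, n)\<close> of \<open>(J + s I)\<^sup>L\<close>, where \<open>J\<close> is the adjacency matrix of the path graph on
  \<open>\<nat>\<close>; the recursion expands the power along the first factor.\<close>
fun motzkin_transfer :: "real \<Rightarrow> nat \<Rightarrow> nat \<Rightarrow> nat \<Rightarrow> real" where
  "motzkin_transfer s 0 m n = (if m = n then 1 else 0)"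
| "motzkin_transfer s (Suc L) m n = motzkin_transfer s L (Suc m) n + s * motzkin_transfer s L m n
     + (if m > 0 then motzkin_transfer s L (m - 1) n else 0)"

lemma motzkin_transfer_eq_0: "m + L < n \<Longrightarrow> motzkin_transfer s L m n = 0"
  by (induction L arbitrary: m) auto

lemma power_mult_cheb_u_expansion:
  "m + L \<le> N \<Longrightarrow> (x + s) ^ L * cheb_u m x = (\<Sum>k\<le>N. motzkin_transfer s L m k * cheb_u k x)"
proof (induction L arbitrary: m)
  case 0
  have "motzkin_transfer s 0 m k * cheb_u k x = (if k = m then cheb_u m x else 0)" for k
    by simp
  with 0 show ?case by (simp add: sum.delta)
next
  case (Suc L)
  have "(x + s) ^ Suc L * cheb_u m x = (x + s) ^ L * (x * cheb_u m x) + s * ((x + s) ^ L * cheb_u m x)"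
    by (simp add: algebra_simps)
  also have "\<dots> = (x + s) ^ L * cheb_u (Suc m) x + s * ((x + s) ^ L * cheb_u m x)
      + (if m > 0 then (x + s) ^ L * cheb_u (m - 1) x else 0)"
    unfolding cheb_u_three_term by (simp add: algebra_simps)
  also have "\<dots> = (\<Sum>k\<le>N. motzkin_transfer s L (Suc m) k * cheb_u k x)
      + s * (\<Sum>k\<le>N. motzkin_transfer s L m k * cheb_u k x)
      + (if m > 0 then (\<Sum>k\<le>N. motzkin_transfer s L (m - 1) k * cheb_u k x) else 0)"
    using Suc by auto
  also have "\<dots> = (\<Sum>k\<le>N. motzkin_transfer s (Suc L) m k * cheb_u k x)"
    by (cases m) (simp_all add: sum.distrib sum_distrib_left algebra_simps)
  finally show ?case .
qed

lemma cheb_u_moment_has_integral: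
  "((\<lambda>x. cheb_u m x * cheb_u n x * (x + s) ^ L * sqrt (4 - x\<^sup>2))
      has_integral 2 * pi * motzkin_transfer s L m n) {-2..2}"
proof -
  define N where "N = m + L + n"
  have "cheb_u m x * cheb_u n x * (x + s) ^ L * sqrt (4 - x\<^sup>2)
      = (\<Sum>k\<le>N. motzkin_transfer s L m k * (cheb_u k x * cheb_u n x * sqrt (4 - x\<^sup>2)))" for x
  proof -
    have "cheb_u m x * cheb_u n x * (x + s) ^ L * sqrt (4 - x\<^sup>2)
        = ((x + s) ^ L * cheb_u m x) * (cheb_u n x * sqrt (4 - x\<^sup>2))"
      by (simp add: algebra_simps)
    also have "\<dots> = (\<Sum>k\<le>N. motzkin_transfer s L m k * cheb_u k x) * (cheb_u n x * sqrt (4 - x\<^sup>2))"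
      by (simp only: power_mult_cheb_u_expansion[of m L N] N_def le_add1)
    finally show ?thesis by (simp add: sum_distrib_right mult.assoc)
  qed
  moreover have "((\<lambda>x. \<Sum>k\<le>N. motzkin_transfer s L m k * (cheb_u k x * cheb_u n x * sqrt (4 - x\<^sup>2)))
      has_integral (\<Sum>k\<le>N. motzkin_transfer s L m k * (if k = n then 2 * pi else 0))) {-2..2}"
    by (intro has_integral_sum finite_atMost has_integral_mult_right cheb_u_orthogonal)
  moreover have "(\<Sum>k\<le>N. motzkin_transfer s L m k * (if k = n then 2 * pi else 0))
      = 2 * pi * motzkin_transfer s L m n"
    by (simp add: N_def if_distrib sum.delta cong: if_cong)
  ultimately show ?thesis by simp
qed

lemma Cons_in_motzkin_paths_iff:
  "m # \<gamma> \<in> motzkin_paths (Suc L) \<longleftrightarrow> \<gamma> \<in> motzkin_paths L \<and> \<bar>int (\<gamma> ! 0) - int m\<bar> \<le> 1"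
proof -
  have steps: "{1..Suc L} = insert 1 (Suc ` {1..L})"
    by (simp add: image_Suc_atLeastAtMost atLeastAtMost_insertL)
  show ?thesis
    unfolding motzkin_paths_def mem_Collect_eq steps ball_simps
    by (auto simp: nth_Cons')
qed

lemma motzkin_paths_between_0: "motzkin_paths_between 0 m n = (if m = n then {[m]} else {})"
  by (auto simp: motzkin_paths_between_def motzkin_paths_def length_Suc_conv)

lemma motzkin_paths_between_Suc:
  "motzkin_paths_between (Suc L) m n = Cons m `
     (motzkin_paths_between L (Suc m) n \<union> motzkin_paths_between L m n \<union>
      (if m > 0 then motzkin_paths_between L (m - 1) n else {}))" (is "?lhs = ?rhs")
proof
  show "?lhs \<subseteq> ?rhs"
  proof
    fix \<gamma>' assume \<gamma>': "\<gamma>' \<in> ?lhs"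
    then obtain \<gamma> where \<gamma>'_eq: "\<gamma>' = m # \<gamma>"
      by (cases \<gamma>') (auto simp: motzkin_paths_between_def motzkin_paths_def)
    with \<gamma>' have \<gamma>: "\<gamma> \<in> motzkin_paths L" "\<gamma> ! L = n" "\<bar>int (\<gamma> ! 0) - int m\<bar> \<le> 1"
      by (auto simp: motzkin_paths_between_def Cons_in_motzkin_paths_iff)
    then have "\<gamma> ! 0 = Suc m \<or> \<gamma> ! 0 = m \<or> (m > 0 \<and> \<gamma> ! 0 = m - 1)"
      by linarith
    with \<gamma> \<gamma>'_eq show "\<gamma>' \<in> ?rhs"
      by (auto simp: motzkin_paths_between_def)
  qed
  show "?rhs \<subseteq> ?lhs"
    by (auto simp: motzkin_paths_between_def Cons_in_motzkin_paths_iff split: if_splits)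
qed

lemma finite_motzkin_paths_between: "finite (motzkin_paths_between L m n)"
  by (induction L arbitrary: m) (simp_all add: motzkin_paths_between_0 motzkin_paths_between_Suc)

lemma motzkin_weight_Cons:
  "motzkin_weight s (Suc L) (m # \<gamma>) = (if \<gamma> ! 0 = m then s else 1) * motzkin_weight s L \<gamma>"
proof -
  have "{k \<in> {1..Suc L}. (m # \<gamma>) ! k = (m # \<gamma>) ! (k - 1)}
      = (if \<gamma> ! 0 = m then {1} else {}) \<union> Suc ` {k \<in> {1..L}. \<gamma> ! k = \<gamma> ! (k - 1)}"
    by (auto simp: image_iff nth_Cons' Suc_le_eq gr0_conv_Suc)
  moreover have "1 \<notin> Suc ` {k \<in> {1..L}. \<gamma> ! k = \<gamma> ! (k - 1)}"
    by auto
  ultimately have "card {k \<in> {1..Suc L}. (m # \<gamma>) ! k = (m # \<gamma>) ! (k - 1)}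
      = (if \<gamma> ! 0 = m then 1 else 0) + card {k \<in> {1..L}. \<gamma> ! k = \<gamma> ! (k - 1)}"
    by (simp add: card_image)
  then show ?thesis
    by (simp add: motzkin_weight_def power_add)
qed

lemma sum_motzkin_weight_eq_transfer:
  "(\<Sum>\<gamma>\<in>motzkin_paths_between L m n. motzkin_weight s L \<gamma>) = motzkin_transfer s L m n"
proof (induction L arbitrary: m)
  case 0
  then show ?case by (simp add: motzkin_paths_between_0 motzkin_weight_def)
next
  case (Suc L)
  let ?P = "\<lambda>k. motzkin_paths_between L k n"
  let ?S = "\<lambda>k. \<Sum>\<gamma>\<in>?P k. motzkin_weight s (Suc L) (m # \<gamma>)"
  have first_step: "?S k = (if k = m then s else 1) * motzkin_transfer s L k n" for k
  proof -
    have "?S k = (\<Sum>\<gamma>\<in>?P k. (if k = m then s else 1) * motzkin_weight s L \<gamma>)"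
      by (rule sum.cong) (auto simp: motzkin_weight_Cons motzkin_paths_between_def)
    then show ?thesis by (simp only: sum_distrib_left[symmetric] Suc.IH)
  qed
  have disjoint: "?P k \<inter> ?P k' = {}" if "k \<noteq> k'" for k k'
    using that by (auto simp: motzkin_paths_between_def)
  have "(\<Sum>\<gamma>\<in>motzkin_paths_between (Suc L) m n. motzkin_weight s (Suc L) \<gamma>)
      = (\<Sum>\<gamma>\<in>?P (Suc m) \<union> ?P m \<union> (if m > 0 then ?P (m - 1) else {}).
           motzkin_weight s (Suc L) (m # \<gamma>))"
    unfolding motzkin_paths_between_Suc by (simp add: sum.reindex)
  also have "\<dots> = ?S (Suc m) + ?S m + (if m > 0 then ?S (m - 1) else 0)"
    by (cases m) (simp_all add: sum.union_disjoint finite_motzkin_paths_between disjoint Int_Un_distrib2)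
  also have "\<dots> = motzkin_transfer s (Suc L) m n"
    using first_step[of "Suc m"] first_step[of m] first_step[of "m - 1"] by auto
  finally show ?case .
qed

lemma motzkin_path_nth_le: "\<gamma> \<in> motzkin_paths L \<Longrightarrow> k \<le> L \<Longrightarrow> \<gamma> ! k \<le> \<gamma> ! 0 + k"
  by (induction k) (force simp: motzkin_paths_def)+

lemma motzkin_paths_from_eq:
  "{\<gamma> \<in> motzkin_paths L. \<gamma> ! 0 = m} = (\<Union>n\<le>m + L. motzkin_paths_between L m n)"
  using motzkin_path_nth_le[of _ L L] by (auto simp: motzkin_paths_between_def)

lemma finite_motzkin_paths_from: "finite {\<gamma> \<in> motzkin_paths L. \<gamma> ! 0 = m}"
  by (simp add: motzkin_paths_from_eq finite_motzkin_paths_between)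

lemma sum_motzkin_paths_from:
  fixes a b :: "nat \<Rightarrow> real"
  shows "(\<Sum>\<gamma> | \<gamma> \<in> motzkin_paths L \<and> \<gamma> ! 0 = m. a (\<gamma> ! 0) * b (\<gamma> ! L) * motzkin_weight s L \<gamma>)
       = a m * (\<Sum>n\<le>m + L. b n * motzkin_transfer s L m n)"
proof -
  have "(\<Sum>\<gamma> | \<gamma> \<in> motzkin_paths L \<and> \<gamma> ! 0 = m. a (\<gamma> ! 0) * b (\<gamma> ! L) * motzkin_weight s L \<gamma>)
      = (\<Sum>n\<le>m + L. \<Sum>\<gamma>\<in>motzkin_paths_between L m n. a m * b n * motzkin_weight s L \<gamma>)"
    unfolding motzkin_paths_from_eq
    by (subst sum.UNION_disjoint)
       (auto simp: finite_motzkin_paths_between[unfolded motzkin_paths_between_def]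
          motzkin_paths_between_def intro!: sum.cong)
  also have "\<dots> = a m * (\<Sum>n\<le>m + L. b n * motzkin_transfer s L m n)"
    by (simp add: sum_distrib_left sum_motzkin_weight_eq_transfer[symmetric] mult.assoc)
  finally show ?thesis .
qed

lemma sums_integral_of_uniform_bound:
  fixes f :: "nat \<Rightarrow> real \<Rightarrow> real"
  assumes cont: "\<And>m. continuous_on {a..b} (f m)"
    and bound: "\<And>m x. x \<in> {a..b} \<Longrightarrow> \<bar>f m x\<bar> \<le> M m"
    and "summable M"
  shows "(\<lambda>m. integral {a..b} (f m)) sums integral {a..b} (\<lambda>x. \<Sum>m. f m x)"
proof -
  have "uniform_limit {a..b} (\<lambda>N x. \<Sum>m<N. f m x) (\<lambda>x. \<Sum>m. f m x) sequentially"
    using bound \<open>summable M\<close> by (intro Weierstrass_m_test) auto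
  then obtain I J where I: "\<And>N. ((\<lambda>x. \<Sum>m<N. f m x) has_integral I N) {a..b}"
    and J: "((\<lambda>x. \<Sum>m. f m x) has_integral J) {a..b}" and lim: "I \<longlonglongrightarrow> J"
    by (rule uniform_limit_integral) (auto intro: continuous_on_sum cont)
  have "I = (\<lambda>N. \<Sum>m<N. integral {a..b} (f m))"
    using cont by (intro ext has_integral_unique[OF I] has_integral_sum finite_lessThan
        integrable_integral integrable_continuous_real)
  with lim show ?thesis
    unfolding sums_def integral_unique[OF J] by simp
qed

lemma abs_cheb_term_le:
  "x \<in> {-2..2} \<Longrightarrow> \<bar>c m * cheb_u m x\<bar> \<le> (real m + 1) * \<bar>c m\<bar>"
  using abs_cheb_u_le[of x m] by (simp add: abs_mult mult_left_mono mult.commute)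

lemma summable_cheb_series:
  "summable (\<lambda>m. (real m + 1) * \<bar>c m\<bar>) \<Longrightarrow> x \<in> {-2..2} \<Longrightarrow> summable (\<lambda>m. c m * cheb_u m x)"
  by (erule summable_comparison_test'[where N = 0]) (simp add: abs_cheb_term_le)

lemma continuous_on_cheb_series:
  assumes "summable (\<lambda>m. (real m + 1) * \<bar>c m\<bar>)"
  shows "continuous_on {-2..2} (\<lambda>x. \<Sum>m. c m * cheb_u m x)"
proof (rule uniform_limit_theorem)
  show "uniform_limit {-2..2} (\<lambda>N x. \<Sum>m<N. c m * cheb_u m x) (\<lambda>x. \<Sum>m. c m * cheb_u m x)
      sequentially"
    using assms by (intro Weierstrass_m_test) (auto simp: abs_cheb_term_le)
qed (auto intro!: always_eventually continuous_intros continuous_on_cheb_u)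

lemma cheb_series_integral_sums:
  assumes summable: "summable (\<lambda>m. (real m + 1) * \<bar>c m\<bar>)" and g: "continuous_on {-2..2} g"
  shows "(\<lambda>m. c m * integral {-2..2} (\<lambda>x. cheb_u m x * g x))
           sums integral {-2..2} (\<lambda>x. (\<Sum>m. c m * cheb_u m x) * g x)"
proof -
  obtain B where B: "\<And>x. x \<in> {-2..2} \<Longrightarrow> \<bar>g x\<bar> \<le> B"
    using compact_imp_bounded[OF compact_continuous_image[OF g compact_Icc]]
    unfolding bounded_real by blast
  have "(\<lambda>m. integral {-2..2} (\<lambda>x. c m * cheb_u m x * g x))
      sums integral {-2..2} (\<lambda>x. \<Sum>m. c m * cheb_u m x * g x)"
  proof (rule sums_integral_of_uniform_bound)
    show "\<bar>c m * cheb_u m x * g x\<bar> \<le> (real m + 1) * \<bar>c m\<bar> * B" if "x \<in> {-2..2}" for m x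
      unfolding abs_mult[of _ "g x"] using that B
      by (intro mult_mono abs_cheb_term_le) auto
  qed (use summable g in \<open>auto intro!: summable_mult2 continuous_intros continuous_on_cheb_u\<close>)
  moreover have "integral {-2..2} (\<lambda>x. \<Sum>m. c m * cheb_u m x * g x)
      = integral {-2..2} (\<lambda>x. (\<Sum>m. c m * cheb_u m x) * g x)"
    using suminf_mult2[OF summable_cheb_series[OF summable]] by (intro integral_cong) auto
  ultimately show ?thesis
    by (simp add: mult.assoc)
qed

lemma integral_cheb_series_moment:
  assumes "summable (\<lambda>n. (real n + 1) * \<bar>b n\<bar>)"
  shows "integral {-2..2} (\<lambda>x. cheb_u m x * ((\<Sum>n. b n * cheb_u n x) * (x + s) ^ L * sqrt (4 - x\<^sup>2)))
       = 2 * pi * (\<Sum>n\<le>m + L. b n * motzkin_transfer s L m n)"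
proof -
  define B where "B x = (\<Sum>n. b n * cheb_u n x)" for x
  have moment: "b n * integral {-2..2} (\<lambda>x. cheb_u n x * (cheb_u m x * (x + s) ^ L * sqrt (4 - x\<^sup>2)))
      = 2 * pi * (b n * motzkin_transfer s L m n)" for n
    using integral_unique[OF cheb_u_moment_has_integral[of m n s L]] by (simp add: ac_simps)
  have "(\<lambda>n. 2 * pi * (b n * motzkin_transfer s L m n))
      sums integral {-2..2} (\<lambda>x. B x * (cheb_u m x * (x + s) ^ L * sqrt (4 - x\<^sup>2)))"
    unfolding B_def moment[symmetric] using assms
    by (intro cheb_series_integral_sums continuous_intros continuous_on_cheb_u)
  moreover have "(\<lambda>n. 2 * pi * (b n * motzkin_transfer s L m n))
      sums (2 * pi * (\<Sum>n\<le>m + L. b n * motzkin_transfer s L m n))"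
    by (intro sums_mult sums_finite) (auto simp: motzkin_transfer_eq_0)
  ultimately have "integral {-2..2} (\<lambda>x. B x * (cheb_u m x * (x + s) ^ L * sqrt (4 - x\<^sup>2)))
      = 2 * pi * (\<Sum>n\<le>m + L. b n * motzkin_transfer s L m n)"
    by (rule sums_unique2)
  moreover have "integral {-2..2} (\<lambda>x. cheb_u m x * (B x * (x + s) ^ L * sqrt (4 - x\<^sup>2)))
      = integral {-2..2} (\<lambda>x. B x * (cheb_u m x * (x + s) ^ L * sqrt (4 - x\<^sup>2)))"
    by (rule arg_cong[where f = "integral {-2..2}"]) (simp add: fun_eq_iff ac_simps)
  ultimately show ?thesis
    by (simp add: B_def)
qed

lemma cheb_series_moment_sums:
  assumes "summable (\<lambda>m. (real m + 1) * \<bar>a m\<bar>)" "summable (\<lambda>n. (real n + 1) * \<bar>b n\<bar>)"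
  shows "(\<lambda>m. a m * (\<Sum>n\<le>m + L. b n * motzkin_transfer s L m n)) sums
     (1 / (2 * pi) * integral {-2..2} (\<lambda>x. (\<Sum>m. a m * cheb_u m x) * (\<Sum>n. b n * cheb_u n x)
        * (x + s) ^ L * sqrt (4 - x\<^sup>2)))"
proof -
  have "(\<lambda>m. a m * integral {-2..2}
          (\<lambda>x. cheb_u m x * ((\<Sum>n. b n * cheb_u n x) * (x + s) ^ L * sqrt (4 - x\<^sup>2))))
      sums integral {-2..2}
          (\<lambda>x. (\<Sum>m. a m * cheb_u m x) * ((\<Sum>n. b n * cheb_u n x) * (x + s) ^ L * sqrt (4 - x\<^sup>2)))"
    using assms by (intro cheb_series_integral_sums continuous_intros continuous_on_cheb_series)
  from sums_divide[OF this, of "2 * pi"] show ?thesis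
    unfolding integral_cheb_series_moment[OF assms(2)] by (simp add: ac_simps)
qed

lemma has_sum_finite_fibres:
  fixes f g :: "'a \<Rightarrow> real" and p :: "'a \<Rightarrow> nat"
  assumes finite: "\<And>m. finite {x \<in> A. p x = m}"
    and dominated: "\<And>x. x \<in> A \<Longrightarrow> \<bar>f x\<bar> \<le> g x"
    and summable: "summable (\<lambda>m. sum g {x \<in> A. p x = m})"
  shows "(f has_sum (\<Sum>m. sum f {x \<in> A. p x = m})) A"
proof -
  define F where "F m = {x \<in> A. p x = m}" for m
  have A_eq: "A = (\<Union>m. F m)" and disjoint: "disjoint_family F"
    by (auto simp: F_def disjoint_family_on_def)
  have g_nonneg: "0 \<le> g x" if "x \<in> A" for x
    using dominated[OF that] by linarith
  have g_summable: "g summable_on (\<Union>m. F m)"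
  proof (rule summable_on_UnionI)
    show "(g has_sum sum g (F m)) (F m)" for m
      using finite by (simp add: F_def)
    show "(\<lambda>m. sum g (F m)) summable_on UNIV"
      using summable g_nonneg by (intro summable_nonneg_imp_summable_on sum_nonneg) (auto simp: F_def)
  qed (use g_nonneg disjoint in \<open>auto simp: F_def[abs_def] disjoint_family_on_def\<close>)
  have f_summable: "f summable_on A"
    by (rule abs_summable_summable,
        rule Infinite_Sum.abs_summable_on_comparison_test'[OF g_summable[folded A_eq]])
       (simp add: dominated)
  have inj: "inj_on snd (Sigma UNIV F)"
    by (auto simp: inj_on_def F_def)
  have image: "snd ` Sigma UNIV F = A"
    by (auto simp: F_def image_iff Bex_def)
  have "((f \<circ> snd) has_sum infsum f A) (Sigma UNIV F)"
    unfolding has_sum_reindex[OF inj, symmetric] image using f_summable by (rule has_sum_infsum)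
  then have "((\<lambda>m. sum f (F m)) has_sum infsum f A) UNIV"
    by (rule has_sum_SigmaD) (use finite in \<open>simp add: F_def\<close>)
  then have "(\<lambda>m. sum f (F m)) sums infsum f A"
    by (rule has_sum_imp_sums)
  with has_sum_infsum[OF f_summable] show ?thesis
    by (simp add: F_def sums_iff)
qed

lemma summable_Suc_mult_of_summable_mult:
  fixes c :: "nat \<Rightarrow> real"
  assumes nonneg: "\<And>n. 0 \<le> c n" and summable: "summable (\<lambda>n. real n * c n)"
  shows "summable (\<lambda>n. (real n + 1) * c n)"
proof -
  have "c n \<le> real n * c n" if "n \<ge> 1" for n
    using mult_right_mono[of 1 "real n" "c n"] nonneg[of n] that by simp
  then have "summable c"
    using nonneg by (intro summable_comparison_test'[OF summable, where N = 1]) auto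
  with summable show ?thesis
    by (simp add: distrib_right summable_add)
qed

lemma summable_Suc_mult_abs_power:
  fixes c :: "nat \<Rightarrow> real"
  assumes "summable (\<lambda>m. (real m + 1) * c m)" "\<And>m. 0 \<le> c m" "\<bar>z\<bar> \<le> 1"
  shows "summable (\<lambda>m. (real m + 1) * \<bar>c m * z ^ m\<bar>)"
proof (rule summable_comparison_test'[OF assms(1), where N = 0])
  fix m
  have "\<bar>c m * z ^ m\<bar> \<le> c m"
    using assms(2)[of m] assms(3)
    by (simp add: abs_mult power_abs mult_left_le power_le_one)
  then show "norm ((real m + 1) * \<bar>c m * z ^ m\<bar>) \<le> (real m + 1) * c m"
    by (simp add: abs_mult mult_left_mono)
qed

lemma motzkin_paths_has_sum_M_int:
  fixes \<alpha> \<beta> :: "nat \<Rightarrow> real"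
  assumes "0 \<le> \<sigma>" and \<alpha>_nonneg: "\<And>n. 0 \<le> \<alpha> n" and \<beta>_nonneg: "\<And>n. 0 \<le> \<beta> n"
    and summable_\<alpha>: "summable (\<lambda>n. (real n + 1) * \<alpha> n)"
    and summable_\<beta>: "summable (\<lambda>n. (real n + 1) * \<beta> n)"
    and "\<bar>z0\<bar> \<le> 1" "\<bar>z1\<bar> \<le> 1"
  shows "((\<lambda>\<gamma>. \<alpha> (\<gamma> ! 0) * \<beta> (\<gamma> ! L) * motzkin_weight \<sigma> L \<gamma> * z0 ^ (\<gamma> ! 0) * z1 ^ (\<gamma> ! L))
           has_sum M_int \<alpha> \<beta> \<sigma> L z0 z1) (motzkin_paths L)"
proof -
  define summand where "summand y0 y1 \<gamma> =
    \<alpha> (\<gamma> ! 0) * y0 ^ (\<gamma> ! 0) * (\<beta> (\<gamma> ! L) * y1 ^ (\<gamma> ! L)) * motzkin_weight \<sigma> L \<gamma>" for y0 y1 \<gamma>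
  define fibre_sum where "fibre_sum y0 y1 m =
    \<alpha> m * y0 ^ m * (\<Sum>n\<le>m + L. \<beta> n * y1 ^ n * motzkin_transfer \<sigma> L m n)" for y0 y1 m
  have fibre: "sum (summand y0 y1) {\<gamma> \<in> motzkin_paths L. \<gamma> ! 0 = m} = fibre_sum y0 y1 m" for y0 y1 m
    unfolding summand_def fibre_sum_def by (rule sum_motzkin_paths_from)
  have series: "fibre_sum y0 y1 sums M_int \<alpha> \<beta> \<sigma> L y0 y1" if "\<bar>y0\<bar> \<le> 1" "\<bar>y1\<bar> \<le> 1" for y0 y1
    using cheb_series_moment_sums[where a = "\<lambda>m. \<alpha> m * y0 ^ m" and b = "\<lambda>n. \<beta> n * y1 ^ n"
        and L = L and s = \<sigma>]
      summable_Suc_mult_abs_power[OF summable_\<alpha> \<alpha>_nonneg that(1)]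
      summable_Suc_mult_abs_power[OF summable_\<beta> \<beta>_nonneg that(2)]
    unfolding fibre_sum_def[abs_def] M_int_def Phi_def by simp
  have "(summand z0 z1 has_sum (\<Sum>m. sum (summand z0 z1) {\<gamma> \<in> motzkin_paths L. \<gamma> ! 0 = m}))
      (motzkin_paths L)"
  proof (rule has_sum_finite_fibres[where g = "summand 1 1"])
    show "\<bar>summand z0 z1 \<gamma>\<bar> \<le> summand 1 1 \<gamma>" for \<gamma>
      using assms by (auto simp: summand_def abs_mult power_abs motzkin_weight_def
          intro!: mult_mono mult_left_le power_le_one)
    show "summable (\<lambda>m. sum (summand 1 1) {\<gamma> \<in> motzkin_paths L. \<gamma> ! 0 = m})"
      unfolding fibre using series[of 1 1] by (simp add: sums_iff)
  qed (rule finite_motzkin_paths_from)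
  then show ?thesis
    unfolding fibre sums_unique[OF series[OF assms(6,7)], symmetric]
    by (simp add: summand_def[abs_def] ac_simps)
qed

theorem lemma3p1:
  fixes \<sigma> :: real and \<alpha> \<beta> :: "nat \<Rightarrow> real"
  assumes "\<sigma> > 0"
    and "\<And>n. \<alpha> n \<ge> 0" and "\<And>n. \<beta> n \<ge> 0"
    and "\<exists>n. \<alpha> n \<noteq> 0" and "\<exists>n. \<beta> n \<noteq> 0"
    and "summable (\<lambda>n. real n * \<alpha> n)" and "summable (\<lambda>n. real n * \<beta> n)"
  shows "(\<forall>m n L. L \<ge> 1 \<longrightarrow>
            1 / (2 * pi) * integral {-2..2}
              (\<lambda>x. cheb_u m x * cheb_u n x * (x + \<sigma>) ^ L * sqrt (4 - x\<^sup>2))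
            = (\<Sum>\<gamma>\<in>motzkin_paths_between L m n. motzkin_weight \<sigma> L \<gamma>))
       \<and> (\<forall>L z0 z1. L \<ge> 1 \<longrightarrow> \<bar>z0\<bar> \<le> 1 \<longrightarrow> \<bar>z1\<bar> \<le> 1 \<longrightarrow>
            ((\<lambda>\<gamma>. motzkin_prob \<alpha> \<beta> \<sigma> L \<gamma> * z0 ^ (\<gamma> ! 0) * z1 ^ (\<gamma> ! L))
              has_sum (M_int \<alpha> \<beta> \<sigma> L z0 z1 / M_int \<alpha> \<beta> \<sigma> L 1 1)) (motzkin_paths L))"
proof (intro conjI allI impI)
  fix m n L :: nat
  show "1 / (2 * pi) * integral {-2..2}
          (\<lambda>x. cheb_u m x * cheb_u n x * (x + \<sigma>) ^ L * sqrt (4 - x\<^sup>2))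
        = (\<Sum>\<gamma>\<in>motzkin_paths_between L m n. motzkin_weight \<sigma> L \<gamma>)"
    by (simp add: integral_unique[OF cheb_u_moment_has_integral] sum_motzkin_weight_eq_transfer)
next
  fix L :: nat and z0 z1 :: real
  assume "\<bar>z0\<bar> \<le> 1" "\<bar>z1\<bar> \<le> 1"
  note has_sum = motzkin_paths_has_sum_M_int[OF less_imp_le[OF assms(1)] assms(2,3)
      summable_Suc_mult_of_summable_mult[OF assms(2,6)]
      summable_Suc_mult_of_summable_mult[OF assms(3,7)]]
  have "infsum (\<lambda>\<gamma>. \<alpha> (\<gamma> ! 0) * \<beta> (\<gamma> ! L) * motzkin_weight \<sigma> L \<gamma>) (motzkin_paths L)
      = M_int \<alpha> \<beta> \<sigma> L 1 1"
    using has_sum[of 1 1 L] by (simp add: infsumI)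
  then show "((\<lambda>\<gamma>. motzkin_prob \<alpha> \<beta> \<sigma> L \<gamma> * z0 ^ (\<gamma> ! 0) * z1 ^ (\<gamma> ! L))
      has_sum (M_int \<alpha> \<beta> \<sigma> L z0 z1 / M_int \<alpha> \<beta> \<sigma> L 1 1)) (motzkin_paths L)"
    using has_sum_divide_const[OF has_sum[OF \<open>\<bar>z0\<bar> \<le> 1\<close> \<open>\<bar>z1\<bar> \<le> 1\<close>]]
    by (simp add: motzkin_prob_def)
qed

end
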